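(* Let $k\ge-1$ and let $w_0:\mathbb{R}\to\mathbb{R}$ be the odd function with $w_0(x)=x$ for $x\in[0,1)$ and $w_0(x)=x^{k+1}$ for $x\ge1$. Let $p(t,y)=\frac{1}{\sqrt{4\pi t}}\int_{\mathbb{R}}e^{-\frac{(y-z)^2}{4t}}w_0(z)\,dz$ for $t>0$ (and $p(0,\cdot)=w_0$) be the solution of $p_t=p_{yy}$ on $(0,+\infty)\times\mathbb{R}$ with $p(0,\cdot)=w_0$. Then for every $t_0>0$ there exist constants $0<C_1<C_2$ such that $C_1y^{k+1}\le p(t,y)\le C_2y^{k+1}$ for all $t\in[0,t_0]$ and all $y\ge\max(\sqrt t,1)$. *)

theory Defs
  imports "HOL-Analysis.Analysis"
begin

definition w0_pos :: "real \<Rightarrow> real \<Rightarrow> real" where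
  "w0_pos k x = (if x < 1 then x else x powr (k + 1))"

definition w0 :: "real \<Rightarrow> real \<Rightarrow> real" where
  "w0 k x = (if x \<ge> 0 then w0_pos k x else - w0_pos k (- x))"

definition heat_p :: "real \<Rightarrow> real \<Rightarrow> real \<Rightarrow> real" where
  "heat_p k t y = (if t = 0 then w0 k y else
     (1 / sqrt (4 * pi * t)) *
       (\<integral>z. exp (- ((y - z)^2) / (4 * t)) * w0 k z \<partial>lborel))"

end

theory Submission
  imports Defs "HOL-Probability.Probability"
begin

text \<open>For t > 0, p(t,y) is the expectation of w0 under the normal law with mean y and variance
2t. Upper bound: for y \<ge> 1 one has |w0 z| \<le> (2y)^(k+1) (1 + (z-y)^(2m)) with 2m \<ge> k+1, and the
Gaussian moment of order 2m is a multiple of t^m. Lower bound: reflecting at y writes 2 p(t,y) as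
the Gaussian average of w0 x + w0 (2y - x). Since w0 is odd and increasing this is nonnegative,
and on the window |x - y| \<le> sqrt t \<le> y it is at least w0 y = y^(k+1); the Gaussian mass of the
window is bounded below independently of t.\<close>

lemma w0_minus: "w0 k (- x) = - w0 k x"
  by (auto simp: w0_def w0_pos_def)

lemma w0_eq_powr: "1 \<le> x \<Longrightarrow> w0 k x = x powr (k + 1)"
  by (simp add: w0_def w0_pos_def)

lemma w0_pos_mono:
  assumes "k \<ge> -1" "0 \<le> u" "u \<le> v"
  shows "w0_pos k u \<le> w0_pos k v"
proof (cases "v < 1")
  case True
  then show ?thesis using assms by (simp add: w0_pos_def)
next
  case False
  then have "1 \<le> v powr (k + 1)" using assms by (intro ge_one_powr_ge_zero) auto
  moreover have "u \<ge> 1 \<Longrightarrow> u powr (k + 1) \<le> v powr (k + 1)"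
    using assms by (intro powr_mono2) auto
  ultimately show ?thesis using False assms by (auto simp: w0_pos_def)
qed

lemma mono_w0:
  assumes "k \<ge> -1"
  shows "mono (w0 k)"
proof (rule monoI)
  fix x y :: real
  assume "x \<le> y"
  consider "0 \<le> x" | "x < 0" "0 \<le> y" | "y < 0" by linarith
  then show "w0 k x \<le> w0 k y"
  proof cases
    case 1
    then show ?thesis using assms \<open>x \<le> y\<close> w0_pos_mono[of k x y] by (simp add: w0_def)
  next
    case 2
    have "w0_pos k 0 = 0" by (simp add: w0_pos_def)
    then show ?thesis using 2 assms w0_pos_mono[of k 0 "- x"] w0_pos_mono[of k 0 y] by (simp add: w0_def)
  next
    case 3
    then show ?thesis using assms \<open>x \<le> y\<close> w0_pos_mono[of k "- y" "- x"] by (simp add: w0_def)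
  qed
qed

lemma abs_w0_le:
  assumes "k \<ge> -1"
  shows "\<bar>w0 k x\<bar> \<le> max 1 \<bar>x\<bar> powr (k + 1)"
proof (cases "\<bar>x\<bar> < 1")
  case True
  then show ?thesis by (auto simp: w0_def w0_pos_def)
next
  case False
  then have "\<bar>w0 k x\<bar> = \<bar>x\<bar> powr (k + 1)" by (auto simp: w0_def w0_pos_def)
  then show ?thesis using False by simp
qed

lemma borel_measurable_w0[measurable]: "w0 k \<in> borel_measurable borel"
  unfolding w0_def[abs_def] w0_pos_def by measurable

lemma odd_mono_reflect_nonneg:
  fixes f :: "real \<Rightarrow> real"
  assumes "mono f" "\<And>x. f (- x) = - f x" "0 \<le> y"
  shows "0 \<le> f x + f (2 * y - x)"
proof -
  have "f (x - 2 * y) \<le> f x" using assms(3) by (intro monoD[OF assms(1)]) simp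
  then show ?thesis using assms(2)[of "2 * y - x"] by simp
qed

lemma odd_mono_reflect_ge:
  fixes f :: "real \<Rightarrow> real"
  assumes "mono f" "\<And>x. f (- x) = - f x" "\<bar>x - y\<bar> \<le> y"
  shows "f y \<le> f x + f (2 * y - x)"
proof -
  have "f 0 = 0" using assms(2)[of 0] by simp
  show ?thesis
  proof (cases "y \<le> x")
    case True
    have "f y \<le> f x" "f 0 \<le> f (2 * y - x)"
      using True assms(3) by (auto intro: monoD[OF assms(1)])
    then show ?thesis using \<open>f 0 = 0\<close> by simp
  next
    case False
    have "f y \<le> f (2 * y - x)" "f 0 \<le> f x"
      using False assms(3) by (auto intro: monoD[OF assms(1)])
    then show ?thesis using \<open>f 0 = 0\<close> by simp
  qed
qed

lemma max_one_abs_powr_le: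
  fixes y z a :: real
  assumes "1 \<le> y" "0 \<le> a" "a \<le> real (2 * m)"
  shows "max 1 \<bar>z\<bar> powr a \<le> (2 * y) powr a * (1 + (z - y) ^ (2 * m))"
proof -
  define M where "M = max 1 \<bar>z - y\<bar>"
  have M1: "1 \<le> M" by (simp add: M_def)
  have "y \<le> y * M" using mult_left_mono[OF M1, of y] assms(1) by simp
  moreover have "M \<le> y * M" using mult_right_mono[OF assms(1), of M] M1 by simp
  moreover have "\<bar>z - y\<bar> \<le> M" by (simp add: M_def)
  ultimately have "1 \<le> 2 * y * M" "\<bar>z\<bar> \<le> 2 * y * M"
    using assms(1) M1 abs_triangle_ineq[of y "z - y"] by linarith+
  then have "max 1 \<bar>z\<bar> \<le> 2 * y * M" by simp
  then have "max 1 \<bar>z\<bar> powr a \<le> (2 * y * M) powr a" using assms(2) by (intro powr_mono2) auto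
  also have "\<dots> = (2 * y) powr a * M powr a" using assms(1) M1 by (simp add: powr_mult)
  also have "M powr a \<le> M powr real (2 * m)" using M1 assms(3) by (intro powr_mono) auto
  also have "\<dots> = M ^ (2 * m)" using M1 by (subst powr_realpow) auto
  also have "M ^ (2 * m) \<le> 1 + (z - y) ^ (2 * m)"
    by (cases "\<bar>z - y\<bar> \<le> 1") (simp_all add: M_def power_even_abs)
  finally show ?thesis using assms(1) by (simp add: mult_left_mono)
qed

lemma abs_w0_le_poly:
  assumes "k \<ge> -1" "1 \<le> y"
  shows "\<bar>w0 k z\<bar> \<le> (2 * y) powr (k + 1) * (1 + (z - y) ^ (2 * nat \<lceil>k + 1\<rceil>))"
proof -
  have "k + 1 \<le> real (2 * nat \<lceil>k + 1\<rceil>)" using assms(1) by linarith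
  then show ?thesis
    using abs_w0_le[OF assms(1), of z] max_one_abs_powr_le[OF assms(2), of "k + 1" "nat \<lceil>k + 1\<rceil>" z]
      assms(1) by linarith
qed

lemma
  fixes f :: "real \<Rightarrow> real"
  assumes "0 < \<sigma>" and [measurable]: "f \<in> borel_measurable borel"
    and bound: "\<And>z. \<bar>f z\<bar> \<le> C * (1 + (z - \<mu>) ^ (2 * m))"
  shows integrable_normal_density_mult_poly_bounded:
      "integrable lborel (\<lambda>z. normal_density \<mu> \<sigma> z * f z)"
    and integral_normal_density_mult_le:
      "(\<integral>z. normal_density \<mu> \<sigma> z * f z \<partial>lborel)
         \<le> C * (1 + fact (2 * m) / ((2 / \<sigma>\<^sup>2) ^ m * fact m))"
proof -
  let ?N = "normal_density \<mu> \<sigma>"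
  let ?B = "\<lambda>z. C * (?N z + ?N z * (z - \<mu>) ^ (2 * m))"
  have pointwise: "\<bar>?N z * f z\<bar> \<le> ?B z" for z
    using mult_left_mono[OF bound[of z] normal_density_nonneg[of \<mu> \<sigma> z]]
    by (simp add: abs_mult algebra_simps)
  have int_B: "integrable lborel ?B"
    using \<open>0 < \<sigma>\<close>
    by (intro integrable_mult_right Bochner_Integration.integrable_add integrable_normal_moment
        integrable_normal_density)
  show int: "integrable lborel (\<lambda>z. ?N z * f z)"
    by (rule Bochner_Integration.integrable_bound[OF int_B])
      (auto intro: order_trans[OF pointwise abs_ge_self])
  have "(\<integral>z. ?N z * f z \<partial>lborel) \<le> (\<integral>z. ?B z \<partial>lborel)"
    using int int_B pointwise by (intro integral_mono) (auto simp: abs_le_iff)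
  also have "\<dots> = C * (1 + fact (2 * m) / ((2 / \<sigma>\<^sup>2) ^ m * fact m))"
    using \<open>0 < \<sigma>\<close>
    by (simp add: integral_normal_moment_even integrable_normal_moment)
  finally show "(\<integral>z. ?N z * f z \<partial>lborel) \<le> C * (1 + fact (2 * m) / ((2 / \<sigma>\<^sup>2) ^ m * fact m))" .
qed

lemma integral_normal_density_reflect:
  "(\<integral>z. normal_density \<mu> \<sigma> z * f z \<partial>lborel) = (\<integral>z. normal_density \<mu> \<sigma> z * f (2 * \<mu> - z) \<partial>lborel)"
proof -
  have "normal_density \<mu> \<sigma> (2 * \<mu> - z) = normal_density \<mu> \<sigma> z" for z
    by (simp add: normal_density_def power2_commute)
  then show ?thesis
    using lborel_integral_real_affine[of "-1" "\<lambda>z. normal_density \<mu> \<sigma> z * f z" "2 * \<mu>"] by simp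
qed

lemma integral_normal_density_mult_ge:
  fixes g :: "real \<Rightarrow> real"
  assumes "0 \<le> r" "integrable lborel (\<lambda>x. normal_density \<mu> \<sigma> x * g x)"
    and "\<And>x. 0 \<le> g x" "\<And>x. \<bar>x - \<mu>\<bar> \<le> r \<Longrightarrow> c \<le> g x"
  shows "2 * r * normal_density \<mu> \<sigma> (\<mu> + r) * c \<le> (\<integral>x. normal_density \<mu> \<sigma> x * g x \<partial>lborel)"
proof -
  let ?N = "normal_density \<mu> \<sigma>"
  have window: "indicator {\<mu> - r .. \<mu> + r} x * (?N (\<mu> + r) * c) \<le> ?N x * g x" for x
  proof (cases "\<bar>x - \<mu>\<bar> \<le> r")
    case True
    then have "(x - \<mu>)\<^sup>2 \<le> r\<^sup>2" using abs_le_square_iff by fastforce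
    then have "?N (\<mu> + r) \<le> ?N x" by (simp add: normal_density_def divide_right_mono)
    have "?N (\<mu> + r) * c \<le> ?N x * g x"
    proof (cases "0 \<le> c")
      case True
      then show ?thesis using \<open>?N (\<mu> + r) \<le> ?N x\<close> assms(4)[OF \<open>\<bar>x - \<mu>\<bar> \<le> r\<close>]
        by (intro mult_mono) auto
    next
      case False
      then have "?N (\<mu> + r) * c \<le> 0" by (simp add: mult_nonneg_nonpos)
      also have "0 \<le> ?N x * g x" using assms(3) by simp
      finally show ?thesis .
    qed
    moreover have "x \<in> {\<mu> - r .. \<mu> + r}" using True by auto
    ultimately show ?thesis by simp
  next
    case False
    then show ?thesis using assms(3) by (auto simp: indicator_def)
  qed
  have "(\<integral>x. indicator {\<mu> - r .. \<mu> + r} x * (?N (\<mu> + r) * c) \<partial>lborel) \<le> (\<integral>x. ?N x * g x \<partial>lborel)"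
    using window assms(2,3) by (intro integral_mono') auto
  then show ?thesis using assms(1) by simp
qed

lemma heat_p_eq_normal_integral:
  assumes "0 < t"
  shows "heat_p k t y = (\<integral>z. normal_density y (sqrt (2 * t)) z * w0 k z \<partial>lborel)"
  using assms by (simp add: heat_p_def normal_density_def power2_commute mult.assoc)

lemma heat_p_le:
  assumes "k \<ge> -1" "0 < t" "t \<le> t0" "1 \<le> y"
  defines "m \<equiv> nat \<lceil>k + 1\<rceil>"
  shows "heat_p k t y \<le> 2 powr (k + 1) * (1 + fact (2 * m) * t0 ^ m / fact m) * y powr (k + 1)"
proof -
  have "heat_p k t y \<le> (2 * y) powr (k + 1) * (1 + fact (2 * m) / ((2 / (sqrt (2 * t))\<^sup>2) ^ m * fact m))"
    unfolding heat_p_eq_normal_integral[OF assms(2)] m_def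
    by (rule integral_normal_density_mult_le[OF _ borel_measurable_w0 abs_w0_le_poly[OF assms(1,4)]])
      (use assms(2) in simp)
  also have "fact (2 * m) / ((2 / (sqrt (2 * t))\<^sup>2) ^ m * fact m) = fact (2 * m) * t ^ m / fact m"
    using assms(2) by (simp add: power_divide field_simps)
  also have "\<dots> \<le> fact (2 * m) * t0 ^ m / fact m"
    using assms(2,3) by (intro divide_right_mono mult_left_mono power_mono) auto
  finally show ?thesis using assms(4) by (simp add: powr_mult mult_ac)
qed

lemma heat_p_ge:
  assumes "k \<ge> -1" "0 < t" "1 \<le> y" "sqrt t \<le> y"
  shows "exp (- 1 / 4) / (2 * sqrt pi) * y powr (k + 1) \<le> heat_p k t y"
proof -
  define N where "N = normal_density y (sqrt (2 * t))"
  define g where "g x = w0 k x + w0 k (2 * y - x)" for x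
  have int_w0: "integrable lborel (\<lambda>x. N x * w0 k x)"
    unfolding N_def
    by (rule integrable_normal_density_mult_poly_bounded[OF _ borel_measurable_w0 abs_w0_le_poly[OF assms(1,3)]])
      (use assms(2) in simp)
  have int_w0_reflected: "integrable lborel (\<lambda>x. N x * w0 k (2 * y - x))"
    using lborel_integrable_real_affine[OF int_w0, of "-1" "2 * y"]
    by (simp add: N_def normal_density_def power2_commute)
  then have int_g: "integrable lborel (\<lambda>x. N x * g x)"
    using int_w0 by (simp add: g_def distrib_left)
  have twice: "2 * heat_p k t y = (\<integral>x. N x * g x \<partial>lborel)"
    using heat_p_eq_normal_integral[OF assms(2)] integral_normal_density_reflect[of y _ "w0 k"]
      int_w0 int_w0_reflected
    by (simp add: N_def g_def distrib_left)
  have "2 * sqrt t * N (y + sqrt t) * y powr (k + 1) \<le> (\<integral>x. N x * g x \<partial>lborel)"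
    unfolding N_def
  proof (rule integral_normal_density_mult_ge)
    show "0 \<le> g x" for x
      unfolding g_def using odd_mono_reflect_nonneg[OF mono_w0[OF assms(1)] w0_minus] assms(3) by simp
    show "y powr (k + 1) \<le> g x" if "\<bar>x - y\<bar> \<le> sqrt t" for x
      using odd_mono_reflect_ge[OF mono_w0[OF assms(1)] w0_minus, of x y] that assms
      by (simp add: g_def w0_eq_powr)
  qed (use int_g N_def assms(2) in auto)
  also have "2 * sqrt t * N (y + sqrt t) = exp (- 1 / 4) / sqrt pi"
    using assms(2) by (simp add: N_def normal_density_def real_sqrt_mult field_simps)
  finally show ?thesis using twice by simp
qed

theorem lemma2p2:
  fixes k t0 :: real
  assumes "k \<ge> -1" and "t0 > 0"
  shows "\<exists>C1 C2. 0 < C1 \<and> C1 < C2 \<and>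
    (\<forall>t y. 0 \<le> t \<and> t \<le> t0 \<and> y \<ge> max (sqrt t) 1 \<longrightarrow>
       C1 * y powr (k + 1) \<le> heat_p k t y \<and> heat_p k t y \<le> C2 * y powr (k + 1))"
proof -
  define m where "m = nat \<lceil>k + 1\<rceil>"
  define C1 where "C1 = exp (- 1 / 4) / (2 * sqrt pi)"
  define C2 where "C2 = 2 powr (k + 1) * (1 + fact (2 * m) * t0 ^ m / fact m)"
  have "0 < C1" by (simp add: C1_def)
  have "1 \<le> sqrt pi" using pi_gt3 by simp
  moreover have "exp (- 1 / 4 :: real) < 1" by simp
  ultimately have "exp (- 1 / 4) < 2 * sqrt pi" by linarith
  then have "C1 < 1" by (simp add: C1_def divide_less_eq)
  have "1 \<le> (2 :: real) powr (k + 1)" using assms(1) by (intro ge_one_powr_ge_zero) auto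
  moreover have "1 \<le> 1 + fact (2 * m) * t0 ^ m / (fact m :: real)" using assms(2) by simp
  ultimately have "1 \<le> C2" unfolding C2_def by (metis mult_mono' mult_1 zero_le_one)
  have "C1 * y powr (k + 1) \<le> heat_p k t y \<and> heat_p k t y \<le> C2 * y powr (k + 1)"
    if "0 \<le> t" "t \<le> t0" "max (sqrt t) 1 \<le> y" for t y
  proof (cases "t = 0")
    case True
    then have "heat_p k t y = y powr (k + 1)" using that by (simp add: heat_p_def w0_eq_powr)
    then show ?thesis
      using \<open>C1 < 1\<close> \<open>1 \<le> C2\<close> mult_right_mono[of C1 1 "y powr (k + 1)"]
        mult_right_mono[of 1 C2 "y powr (k + 1)"] by simp
  next
    case False
    then have "0 < t" using that(1) by simp
    then show ?thesis using heat_p_ge[OF assms(1), of t y] heat_p_le[OF assms(1), of t t0 y] that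
      by (simp add: C1_def C2_def m_def)
  qed
  then show ?thesis using \<open>0 < C1\<close> \<open>C1 < 1\<close> \<open>1 \<le> C2\<close> by (intro exI[of _ C1] exI[of _ C2]) auto
qed

end
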